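(* Let $T\ge K\ge2$, $0<V\le T/K$, and let $W_1,\dots,W_N$ be positive integers with $\sum_j W_j=T$. Set $c=\frac18-\frac{\sqrt{\log(4/3)}}8$. Then for every policy $\pi$: (i) if $W_i\le K^{1/3}(T/V)^{2/3}$ for all $i\in[N]$, then $R^\pi(T;W,V)\ge \frac{c}{3}(KV)^{1/3}T^{2/3}$; (ii) if $W_i\ge K^{1/3}(T/V)^{2/3}$ for all $i\in[N]$, then $R^\pi(T;W,V)\ge c\sum_{i=1}^N\sqrt{KW_i}$.
   Context: Bandit model: arms $[K]=\{1,\dots,K\}$, horizon $T$; in period $t$ arm $k$ has a random reward $Y_{t,k}\in[0,1]$ with mean $\mu_{t,k}\in[0,1]$, independent across periods. A policy $\pi$ chooses $A_t\in[K]$, possibly with internal randomization, as a function only of $A_1,Y_{1,A_1},\dots,A_{t-1},Y_{t-1,A_{t-1}}$, and then observes $Y_{t,A_t}$. $\log$ is the natural logarithm. Window $j$ is $\mathcal W_j=\{\sum_{i<j}W_i+1,\dots,\sum_{i\le j}W_i\}$ and $\mu^*_{\mathcal W_j}=\frac1{W_j}\max_{k}\sum_{t\in\mathcal W_j}\mu_{t,k}$. Regret: $R^\pi(T;W,\{\mu_{t,k}\})=\sum_{j=1}^N W_j\mu^*_{\mathcal W_j}-\mathbb E[\sum_{t=1}^T\mu_{t,A_t}]$, and $R^\pi(T;W,V)=\sup R^\pi(T;W,\{\mu_{t,k}\})$ over all mean sequences $\{\mu_{t,k}\}\in[0,1]^{T\times K}$ with $\sum_{t=1}^{T-1}\max_k|\mu_{t,k}-\mu_{t+1,k}|\le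 V$ and all reward distributions on $[0,1]$ with those means (in particular Bernoulli rewards are allowed). *)

theory Defs
  imports "HOL-Probability.Probability"
begin

text \<open>Histories: list of (chosen arm, observed reward), oldest first.
  Arms are 1..K, periods are 1..T.
  An environment nu assigns to period t and arm k a reward distribution nu t k.\<close>

type_synonym history = "(nat \<times> real) list"
type_synonym policy = "history \<Rightarrow> nat pmf"
type_synonym env = "nat \<Rightarrow> nat \<Rightarrow> real pmf"

definition is_policy :: "nat \<Rightarrow> policy \<Rightarrow> bool" where
  "is_policy K \<pi> \<longleftrightarrow> (\<forall>h. set_pmf (\<pi> h) \<subseteq> {1..K})"

definition mean :: "env \<Rightarrow> nat \<Rightarrow> nat \<Rightarrow> real" where
  "mean \<nu> t k = measure_pmf.expectation (\<nu> t k) (\<lambda>y. y)"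

fun hist :: "policy \<Rightarrow> env \<Rightarrow> nat \<Rightarrow> history pmf" where
  "hist \<pi> \<nu> 0 = return_pmf []"
| "hist \<pi> \<nu> (Suc n) =
     bind_pmf (hist \<pi> \<nu> n) (\<lambda>h. bind_pmf (\<pi> h) (\<lambda>a.
       map_pmf (\<lambda>y. h @ [(a, y)]) (\<nu> (Suc n) a)))"

definition action :: "policy \<Rightarrow> env \<Rightarrow> nat \<Rightarrow> nat pmf" where
  "action \<pi> \<nu> t = bind_pmf (hist \<pi> \<nu> (t - 1)) \<pi>"

definition expected_reward :: "policy \<Rightarrow> env \<Rightarrow> nat \<Rightarrow> real" where
  "expected_reward \<pi> \<nu> T =
     (\<Sum>t=1..T. measure_pmf.expectation (action \<pi> \<nu> t) (\<lambda>a. mean \<nu> t a))"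

definition window :: "(nat \<Rightarrow> nat) \<Rightarrow> nat \<Rightarrow> nat set" where
  "window W j = {(\<Sum>i=1..<j. W i) + 1 .. (\<Sum>i=1..j. W i)}"

text \<open>Regret R^pi(T; W, {mu}) for the environment nu; note
  W_j * mu*_{W_j} = max_k sum_{t in W_j} mu_{t,k}.\<close>
definition regret :: "nat \<Rightarrow> nat \<Rightarrow> nat \<Rightarrow> (nat \<Rightarrow> nat) \<Rightarrow> policy \<Rightarrow> env \<Rightarrow> real" where
  "regret K T N W \<pi> \<nu> =
     (\<Sum>j=1..N. Max ((\<lambda>k. \<Sum>t\<in>window W j. mean \<nu> t k) ` {1..K}))
     - expected_reward \<pi> \<nu> T"

definition admissible :: "nat \<Rightarrow> nat \<Rightarrow> real \<Rightarrow> env \<Rightarrow> bool" where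
  "admissible K T V \<nu> \<longleftrightarrow>
     (\<forall>t\<in>{1..T}. \<forall>k\<in>{1..K}. set_pmf (\<nu> t k) \<subseteq> {0..1}) \<and>
     (\<Sum>t=1..<T. Max ((\<lambda>k. \<bar>mean \<nu> t k - mean \<nu> (t + 1) k\<bar>) ` {1..K})) \<le> V"

definition worst_regret :: "nat \<Rightarrow> nat \<Rightarrow> nat \<Rightarrow> (nat \<Rightarrow> nat) \<Rightarrow> real \<Rightarrow> policy \<Rightarrow> real" where
  "worst_regret K T N W V \<pi> = (SUP \<nu>\<in>{\<nu>. admissible K T V \<nu>}. regret K T N W \<pi> \<nu>)"

end

theory Submission
  imports Defs
begin

text \<open>
  Split the horizon into blocks. For each block \<open>B\<close> in turn, pick an arm \<open>k\<close> that the policy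
  pulls at most \<open>|B|/K\<close> times in expectation during \<open>B\<close> when no arm is better than a fair
  coin there, and raise the mean of \<open>k\<close> on \<open>B\<close> by \<open>\<epsilon>\<close>. By the divergence decomposition the
  two laws of the history are at Kullback--Leibler distance at most \<open>8 ln (4/3) \<epsilon>\<^sup>2 |B| / K\<close>,
  so by a Pinsker-type inequality, as long as \<open>16 \<epsilon>\<^sup>2 |B| \<le> K\<close>, the policy still misses the
  good arm in a fraction \<open>(1 - \<surd>(ln (4/3)))/2\<close> of the periods of \<open>B\<close>, each miss costing \<open>\<epsilon>\<close>.
  The choices made for later blocks do not affect the policy on earlier ones, so these losses
  add up.

  For short windows, consecutive windows are grouped into blocks of length about
  \<open>D = K^(1/3) (T/V)^(2/3)\<close> with \<open>\<epsilon> = (KV/T)^(1/3)/12\<close>; for long windows, each window \<open>W\<^sub>i\<close>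
  is a block with \<open>\<epsilon> = \<surd>(K/W\<^sub>i)/4\<close>. The means change only between blocks, and in both
  cases the variation budget \<open>V\<close> pays for these jumps.
\<close>

section \<open>Kullback--Leibler divergence of finitely supported pmfs\<close>

lemma expectation_bind_pmf_finite:
  fixes g :: "'b \<Rightarrow> real"
  assumes "finite (set_pmf M)" "\<And>x. x \<in> set_pmf M \<Longrightarrow> finite (set_pmf (f x))"
  shows "measure_pmf.expectation (bind_pmf M f) g =
         measure_pmf.expectation M (\<lambda>x. measure_pmf.expectation (f x) g)"
proof -
  let ?S = "\<Union>x\<in>set_pmf M. set_pmf (f x)"
  have fS: "finite ?S" using assms by auto
  have "measure_pmf.expectation (bind_pmf M f) g = (\<Sum>y\<in>?S. g y * pmf (bind_pmf M f) y)"
    by (rule integral_measure_pmf_real) (use fS in auto)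
  also have "\<dots> = (\<Sum>y\<in>?S. g y * (\<Sum>x\<in>set_pmf M. pmf (f x) y * pmf M x))"
    by (intro sum.cong refl) (simp add: pmf_bind integral_measure_pmf_real[OF assms(1)])
  also have "\<dots> = (\<Sum>x\<in>set_pmf M. (\<Sum>y\<in>?S. g y * pmf (f x) y) * pmf M x)"
    by (simp add: sum_distrib_left sum_distrib_right sum.swap[of _ ?S] mult_ac)
  also have "\<dots> = (\<Sum>x\<in>set_pmf M. measure_pmf.expectation (f x) g * pmf M x)"
    by (intro sum.cong refl, subst integral_measure_pmf_real[of ?S]) (use fS in auto)
  also have "\<dots> = measure_pmf.expectation M (\<lambda>x. measure_pmf.expectation (f x) g)"
    by (rule integral_measure_pmf_real[symmetric]) (use assms in auto)
  finally show ?thesis .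
qed

text \<open>A junk value unless the support of \<open>P\<close> lies in that of \<open>Q\<close>, which every lemma below
  assumes.\<close>
definition KL_pmf :: "'a pmf \<Rightarrow> 'a pmf \<Rightarrow> real" where
  "KL_pmf P Q = measure_pmf.expectation P (\<lambda>x. ln (pmf P x / pmf Q x))"

lemma KL_pmf_self [simp]: "KL_pmf P P = 0"
proof -
  have "KL_pmf P P = measure_pmf.expectation P (\<lambda>x. 0)"
    unfolding KL_pmf_def by (intro integral_cong_AE) (auto simp: AE_measure_pmf_iff set_pmf_iff)
  thus ?thesis by simp
qed

lemma KL_pmf_map_inj:
  assumes "inj g" "set_pmf P \<subseteq> set_pmf Q"
  shows "KL_pmf (map_pmf g P) (map_pmf g Q) = KL_pmf P Q"
  unfolding KL_pmf_def using assms by (simp add: pmf_map_inj')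

lemma pmf_bind_map_Pair:
  "pmf (bind_pmf M (\<lambda>x. map_pmf (Pair x) (f x))) (a, b) = pmf M a * pmf (f a) b"
proof -
  have "pmf (bind_pmf M (\<lambda>x. map_pmf (Pair x) (f x))) (a, b) =
        measure_pmf.expectation M (\<lambda>x. indicator {a} x * pmf (f a) b)"
    unfolding pmf_bind
    by (intro Bochner_Integration.integral_cong refl)
       (auto simp: indicator_def pmf_map vimage_def measure_pmf_single)
  thus ?thesis by (simp add: measure_pmf_single)
qed

lemma KL_pmf_bind_map_Pair:
  assumes fin: "finite (set_pmf M0)" "\<And>x. finite (set_pmf (f0 x))"
    and sub: "set_pmf M0 \<subseteq> set_pmf M1" "\<And>x. x \<in> set_pmf M0 \<Longrightarrow> set_pmf (f0 x) \<subseteq> set_pmf (f1 x)"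
  shows "KL_pmf (bind_pmf M0 (\<lambda>x. map_pmf (Pair x) (f0 x))) (bind_pmf M1 (\<lambda>x. map_pmf (Pair x) (f1 x)))
       = KL_pmf M0 M1 + measure_pmf.expectation M0 (\<lambda>x. KL_pmf (f0 x) (f1 x))"
proof -
  let ?B0 = "bind_pmf M0 (\<lambda>x. map_pmf (Pair x) (f0 x))"
  let ?B1 = "bind_pmf M1 (\<lambda>x. map_pmf (Pair x) (f1 x))"
  have split_ln: "ln (pmf ?B0 (x,y) / pmf ?B1 (x,y)) = ln (pmf M0 x / pmf M1 x) + ln (pmf (f0 x) y / pmf (f1 x) y)"
    if x: "x \<in> set_pmf M0" and y: "y \<in> set_pmf (f0 x)" for x y
  proof -
    have "pmf M0 x > 0" "pmf M1 x > 0" "pmf (f0 x) y > 0" "pmf (f1 x) y > 0"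
      using x y sub(1) sub(2)[OF x] by (auto simp: pmf_positive)
    thus ?thesis by (simp add: pmf_bind_map_Pair ln_mult ln_div)
  qed
  have inner: "measure_pmf.expectation (f0 x) (\<lambda>y. ln (pmf ?B0 (x,y) / pmf ?B1 (x,y)))
      = ln (pmf M0 x / pmf M1 x) + KL_pmf (f0 x) (f1 x)" if x: "x \<in> set_pmf M0" for x
  proof -
    have "measure_pmf.expectation (f0 x) (\<lambda>y. ln (pmf ?B0 (x,y) / pmf ?B1 (x,y))) =
          measure_pmf.expectation (f0 x) (\<lambda>y. ln (pmf M0 x / pmf M1 x) + ln (pmf (f0 x) y / pmf (f1 x) y))"
      by (intro integral_cong_AE) (auto simp: AE_measure_pmf_iff split_ln[OF x])
    thus ?thesis unfolding KL_pmf_def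
      by (subst (asm) Bochner_Integration.integral_add) (auto intro!: integrable_measure_pmf_finite fin)
  qed
  have "KL_pmf ?B0 ?B1 = measure_pmf.expectation M0 (\<lambda>x. measure_pmf.expectation (f0 x)
          (\<lambda>y. ln (pmf ?B0 (x,y) / pmf ?B1 (x,y))))"
    unfolding KL_pmf_def by (subst expectation_bind_pmf_finite) (use fin in auto)
  also have "\<dots> = measure_pmf.expectation M0 (\<lambda>x. ln (pmf M0 x / pmf M1 x) + KL_pmf (f0 x) (f1 x))"
    by (intro integral_cong_AE) (auto simp: AE_measure_pmf_iff inner)
  also have "\<dots> = KL_pmf M0 M1 + measure_pmf.expectation M0 (\<lambda>x. KL_pmf (f0 x) (f1 x))"
    unfolding KL_pmf_def
    by (subst Bochner_Integration.integral_add) (auto intro!: integrable_measure_pmf_finite fin)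
  finally show ?thesis .
qed

text \<open>Donsker--Varadhan: a consequence of \<open>ln x \<le> x - 1\<close> applied to the density of the
  tilted measure \<open>exp g \<cdot> Q / Z\<close> with respect to \<open>P\<close>.\<close>
lemma expectation_le_KL_pmf_plus_ln_expectation_exp:
  fixes g :: "'a \<Rightarrow> real"
  assumes fP: "finite (set_pmf P)" and fQ: "finite (set_pmf Q)" and sub: "set_pmf P \<subseteq> set_pmf Q"
  shows "measure_pmf.expectation P g \<le> KL_pmf P Q + ln (measure_pmf.expectation Q (\<lambda>x. exp (g x)))"
proof -
  define Z where "Z = measure_pmf.expectation Q (\<lambda>x. exp (g x))"
  have Zs: "Z = (\<Sum>x\<in>set_pmf Q. exp (g x) * pmf Q x)"
    unfolding Z_def by (rule integral_measure_pmf_real) (use fQ in auto)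
  have Zpos: "Z > 0" unfolding Zs
    by (intro sum_pos fQ) (auto simp: pmf_positive set_pmf_not_empty)
  have Zge: "(\<Sum>x\<in>set_pmf P. exp (g x) * pmf Q x) \<le> Z" unfolding Zs
    by (intro sum_mono2 fQ sub) auto
  have eP: "measure_pmf.expectation P g = (\<Sum>x\<in>set_pmf P. g x * pmf P x)"
    by (rule integral_measure_pmf_real) (use fP in auto)
  have eK: "KL_pmf P Q = (\<Sum>x\<in>set_pmf P. ln (pmf P x / pmf Q x) * pmf P x)"
    unfolding KL_pmf_def by (rule integral_measure_pmf_real) (use fP in auto)
  have sum1: "(\<Sum>x\<in>set_pmf P. pmf P x) = 1"
    using sum_pmf_eq_1[OF fP] by simp
  have pos: "pmf P x > 0" "pmf Q x > 0" if "x \<in> set_pmf P" for x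
    using that sub by (auto simp: pmf_positive)
  have summand: "pmf P x * ln (pmf Q x * exp (g x) / (pmf P x * Z)) =
      g x * pmf P x - ln (pmf P x / pmf Q x) * pmf P x - pmf P x * ln Z" if "x \<in> set_pmf P" for x
    using pos[OF that] Zpos by (simp add: ln_mult ln_div algebra_simps)
  have "measure_pmf.expectation P g - KL_pmf P Q - ln Z =
      (\<Sum>x\<in>set_pmf P. pmf P x * ln (pmf Q x * exp (g x) / (pmf P x * Z)))"
    unfolding eP eK
    by (simp add: summand sum_subtractf sum_distrib_right[symmetric] sum1 cong: sum.cong)
  also have "\<dots> \<le> (\<Sum>x\<in>set_pmf P. pmf P x * (pmf Q x * exp (g x) / (pmf P x * Z) - 1))"
    using Zpos by (intro sum_mono mult_left_mono ln_le_minus_one) (auto simp: pos)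
  also have "\<dots> = (\<Sum>x\<in>set_pmf P. exp (g x) * pmf Q x / Z - pmf P x)"
    using Zpos by (intro sum.cong refl) (auto dest: pos simp: field_simps)
  also have "\<dots> = (\<Sum>x\<in>set_pmf P. exp (g x) * pmf Q x) / Z - 1"
    by (simp add: sum_subtractf sum_divide_distrib[symmetric] sum1)
  also have "\<dots> \<le> 0" using Zge Zpos by (simp add: divide_le_eq)
  finally show ?thesis unfolding Z_def by simp
qed

lemma hoeffding_lemma_pmf:
  fixes f :: "'a \<Rightarrow> real"
  assumes fQ: "finite (set_pmf Q)" and rng: "\<And>x. x \<in> set_pmf Q \<Longrightarrow> f x \<in> {a..b}" and l: "l > 0"
  shows "measure_pmf.expectation Q (\<lambda>x. exp (l * (f x - measure_pmf.expectation Q f)))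
          \<le> exp (l\<^sup>2 * (b - a)\<^sup>2 / 8)"
proof -
  interpret interval_bounded_random_variable "measure_pmf Q" f a b
    by unfold_locales (use rng in \<open>auto simp: AE_measure_pmf_iff\<close>)
  have "ennreal (measure_pmf.expectation Q (\<lambda>x. exp (l * (f x - measure_pmf.expectation Q f))))
     = (\<integral>\<^sup>+x. ennreal (exp (l * (f x - measure_pmf.expectation Q f))) \<partial>measure_pmf Q)"
    by (rule nn_integral_eq_integral[symmetric]) (auto intro: integrable_measure_pmf_finite[OF fQ])
  also have "\<dots> \<le> ennreal (exp (l\<^sup>2 * (b - a)\<^sup>2 / 8))"
    by (rule Hoeffdings_lemma_nn_integral[OF l])
  finally show ?thesis by (subst (asm) ennreal_le_iff) auto
qed

lemma expectation_diff_le_KL_pmf_tilted: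
  fixes f :: "'a \<Rightarrow> real"
  assumes fP: "finite (set_pmf P)" and fQ: "finite (set_pmf Q)" and sub: "set_pmf P \<subseteq> set_pmf Q"
    and rng: "\<And>x. x \<in> set_pmf Q \<Longrightarrow> f x \<in> {0..L}" and l: "l > 0"
  shows "l * (measure_pmf.expectation Q f - measure_pmf.expectation P f) \<le> KL_pmf P Q + l\<^sup>2 * L\<^sup>2 / 8"
proof -
  define g where "g x = l * (measure_pmf.expectation Q f - f x)" for x
  have "l * (measure_pmf.expectation Q f - measure_pmf.expectation P f) = measure_pmf.expectation P g"
    unfolding g_def
    by (simp add: Bochner_Integration.integral_diff integrable_measure_pmf_finite[OF fP] algebra_simps)
  also have "\<dots> \<le> KL_pmf P Q + ln (measure_pmf.expectation Q (\<lambda>x. exp (g x)))"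
    by (rule expectation_le_KL_pmf_plus_ln_expectation_exp[OF fP fQ sub])
  also have "ln (measure_pmf.expectation Q (\<lambda>x. exp (g x))) \<le> l\<^sup>2 * L\<^sup>2 / 8"
  proof -
    have "measure_pmf.expectation Q (\<lambda>x. exp (g x))
        = measure_pmf.expectation Q (\<lambda>x. exp (l * (- f x - measure_pmf.expectation Q (\<lambda>x. - f x))))"
      unfolding g_def by (simp add: algebra_simps)
    also have "\<dots> \<le> exp (l\<^sup>2 * (0 - - L)\<^sup>2 / 8)"
      by (rule hoeffding_lemma_pmf[OF fQ _ l]) (use rng in auto)
    finally have le: "measure_pmf.expectation Q (\<lambda>x. exp (g x)) \<le> exp (l\<^sup>2 * L\<^sup>2 / 8)" by simp
    have "measure_pmf.expectation Q (\<lambda>x. exp (g x)) > 0"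
      by (subst integral_measure_pmf_real[OF fQ])
         (auto intro!: sum_pos fQ simp: pmf_positive set_pmf_not_empty)
    with le show ?thesis by (metis ln_exp ln_mono)
  qed
  finally show ?thesis by simp
qed

text \<open>A Pinsker-type transportation inequality, obtained by optimising the tilting parameter.\<close>
lemma expectation_diff_le_sqrt_KL_pmf:
  fixes f :: "'a \<Rightarrow> real"
  assumes fP: "finite (set_pmf P)" and fQ: "finite (set_pmf Q)" and sub: "set_pmf P \<subseteq> set_pmf Q"
    and rng: "\<And>x. x \<in> set_pmf Q \<Longrightarrow> f x \<in> {0..L}" and L: "L > 0"
    and KL: "KL_pmf P Q \<le> \<kappa>" and \<kappa>: "\<kappa> > 0"
  shows "measure_pmf.expectation Q f - measure_pmf.expectation P f \<le> L * sqrt (\<kappa> / 2)"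
proof -
  define r where "r = sqrt (\<kappa> / 2)"
  have r: "r > 0" "r\<^sup>2 = \<kappa> / 2" unfolding r_def using \<kappa> by auto
  have "(4 * r / L) * (measure_pmf.expectation Q f - measure_pmf.expectation P f)
      \<le> KL_pmf P Q + (4 * r / L)\<^sup>2 * L\<^sup>2 / 8"
    using r L by (intro expectation_diff_le_KL_pmf_tilted[OF fP fQ sub rng]) auto
  also have "\<dots> \<le> \<kappa> + 2 * r\<^sup>2"
    using KL L by (simp add: power_divide)
  also have "\<dots> = (4 * r / L) * (L * r)"
    using r L by (simp add: field_simps power2_eq_square)
  finally show ?thesis
    using r L by (subst (asm) mult_le_cancel_left_pos) (auto simp: r_def)
qed

section \<open>Bernoulli rewards\<close>

definition bern_pmf :: "real \<Rightarrow> real pmf" where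
  "bern_pmf p = map_pmf (\<lambda>b. if b then 1 else 0) (bernoulli_pmf p)"

lemma set_bern_pmf: "0 < p \<Longrightarrow> p < 1 \<Longrightarrow> set_pmf (bern_pmf p) = {0, 1}"
  unfolding bern_pmf_def by (auto simp: set_pmf_bernoulli)

lemma expectation_bern_pmf: "0 \<le> p \<Longrightarrow> p \<le> 1 \<Longrightarrow> measure_pmf.expectation (bern_pmf p) (\<lambda>y. y) = p"
  unfolding bern_pmf_def by simp

lemma KL_pmf_bern_pmf:
  assumes "0 < p" "p < 1" "0 < q" "q < 1"
  shows "KL_pmf (bern_pmf p) (bern_pmf q) = p * ln (p / q) + (1 - p) * ln ((1 - p) / (1 - q))"
proof -
  have inj: "inj (\<lambda>b. if b then 1 else (0::real))" by (auto simp: inj_on_def split: if_splits)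
  have "KL_pmf (bern_pmf p) (bern_pmf q) = KL_pmf (bernoulli_pmf p) (bernoulli_pmf q)"
    unfolding bern_pmf_def by (rule KL_pmf_map_inj[OF inj]) (use assms in \<open>auto simp: set_pmf_bernoulli\<close>)
  also have "\<dots> = p * ln (p / q) + (1 - p) * ln ((1 - p) / (1 - q))"
    unfolding KL_pmf_def using assms
    by (subst integral_measure_pmf_real[of UNIV]) (auto simp: UNIV_bool)
  finally show ?thesis .
qed

text \<open>The chord of the convex function \<open>- ln (1 - x)\<close> over \<open>[0, 1/4]\<close>.\<close>
lemma minus_ln_one_minus_le_chord:
  fixes x :: real assumes "0 \<le> x" "x \<le> 1/4"
  shows "- ln (1 - x) \<le> 4 * ln (4/3) * x"
proof -
  have cvx: "convex_on {..<1} (\<lambda>x::real. - ln (1 - x))"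
  proof (rule convex_on_realI[where f' = "\<lambda>x. 1 / (1 - x)"])
    show "((\<lambda>x. - ln (1 - x)) has_real_derivative 1 / (1 - x)) (at x)" if "x \<in> {..<1}" for x :: real
      using that by (auto intro!: derivative_eq_intros simp: field_simps)
    show "1 / (1 - x) \<le> 1 / (1 - y)" if "x \<in> {..<1}" "y \<in> {..<1}" "x \<le> y" for x y :: real
      using that by (intro divide_left_mono) auto
  qed simp
  have "- ln (1 - ((1 - 4*x) *\<^sub>R 0 + (4*x) *\<^sub>R (1/4))) \<le> (1 - 4*x) * (- ln (1 - 0)) + (4*x) * (- ln (1 - 1/4))"
    by (rule convex_onD[OF cvx]) (use assms in auto)
  moreover have "ln (3/4 :: real) = - ln (4/3)"
    by (simp add: ln_div)
  ultimately show ?thesis by (simp add: mult_ac)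
qed

lemma KL_pmf_bern_pmf_half_le:
  assumes "0 \<le> e" "e \<le> 1/4"
  shows "KL_pmf (bern_pmf (1/2)) (bern_pmf (1/2 + e)) \<le> 8 * ln (4/3) * e\<^sup>2"
proof -
  have "e\<^sup>2 \<le> (1/4)\<^sup>2" using assms by (intro power_mono) auto
  hence e2: "4 * e\<^sup>2 \<le> 1/4" by (simp add: power2_eq_square)
  have "KL_pmf (bern_pmf (1/2)) (bern_pmf (1/2 + e)) = (ln ((1/2) / (1/2 + e)) + ln ((1/2) / (1/2 - e))) / 2"
    using assms by (subst KL_pmf_bern_pmf) (auto simp: algebra_simps)
  also have "ln ((1/2) / (1/2 + e)) + ln ((1/2) / (1/2 - e)) = ln (((1/2) / (1/2 + e)) * ((1/2) / (1/2 - e)))"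
    using assms by (subst ln_mult) auto
  also have "((1/2) / (1/2 + e)) * ((1/2) / (1/2 - e)) = 1 / (1 - 4 * e\<^sup>2)"
    using assms by (simp add: field_simps power2_eq_square)
  also have "ln (1 / (1 - 4 * e\<^sup>2)) = - ln (1 - 4 * e\<^sup>2)"
    using e2 by (subst ln_div) auto
  also have "- ln (1 - 4 * e\<^sup>2) \<le> 4 * ln (4/3) * (4 * e\<^sup>2)"
    using e2 by (intro minus_ln_one_minus_le_chord) auto
  finally show ?thesis by (simp add: divide_right_mono mult_ac)
qed

section \<open>Histories\<close>

lemma hist_Suc_as_map_bind_Pair:
  "hist \<pi> \<nu> (Suc n) = map_pmf (\<lambda>(h,(a,y)). h @ [(a,y)])
     (bind_pmf (hist \<pi> \<nu> n) (\<lambda>h. map_pmf (Pair h) (bind_pmf (\<pi> h) (\<lambda>a. map_pmf (Pair a) (\<nu> (Suc n) a)))))"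
  by (simp add: map_bind_pmf map_pmf_comp)

lemma finite_set_hist:
  assumes "\<And>h. finite (set_pmf (\<pi> h))" "\<And>t a. finite (set_pmf (\<nu> t a))"
  shows "finite (set_pmf (hist \<pi> \<nu> n))"
  by (induction n) (auto simp: assms)

lemma set_hist_cong:
  assumes "\<And>t a. set_pmf (\<nu>0 t a) = set_pmf (\<nu>1 t a)"
  shows "set_pmf (hist \<pi> \<nu>0 n) = set_pmf (hist \<pi> \<nu>1 n)"
  by (induction n) (auto simp: assms)

lemma length_hist: "h \<in> set_pmf (hist \<pi> \<nu> n) \<Longrightarrow> length h = n"
  by (induction n arbitrary: h) auto

lemma hist_cong:
  assumes "\<And>t. t \<in> {1..n} \<Longrightarrow> \<nu> t = \<nu>' t"
  shows "hist \<pi> \<nu> n = hist \<pi> \<nu>' n"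
  using assms by (induction n) auto

lemma action_cong:
  assumes "\<And>t'. t' \<in> {1..<t} \<Longrightarrow> \<nu> t' = \<nu>' t'"
  shows "action \<pi> \<nu> t = action \<pi> \<nu>' t"
  unfolding action_def by (subst hist_cong[of "t-1" \<nu> \<nu>']) (use assms in auto)

lemma set_action_subset: "is_policy K \<pi> \<Longrightarrow> set_pmf (action \<pi> \<nu> t) \<subseteq> {1..K}"
  unfolding action_def is_policy_def by auto

lemma KL_pmf_hist_Suc:
  assumes fp: "\<And>h. finite (set_pmf (\<pi> h))" and fe: "\<And>t a. finite (set_pmf (\<nu>0 t a))"
    and se: "\<And>t a. set_pmf (\<nu>0 t a) = set_pmf (\<nu>1 t a)"
  shows "KL_pmf (hist \<pi> \<nu>0 (Suc n)) (hist \<pi> \<nu>1 (Suc n)) = KL_pmf (hist \<pi> \<nu>0 n) (hist \<pi> \<nu>1 n)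
     + measure_pmf.expectation (action \<pi> \<nu>0 (Suc n)) (\<lambda>a. KL_pmf (\<nu>0 (Suc n) a) (\<nu>1 (Suc n) a))"
proof -
  have fh: "finite (set_pmf (hist \<pi> \<nu>0 n))" by (rule finite_set_hist) (use fp fe in auto)
  have sh: "set_pmf (hist \<pi> \<nu>0 n) \<subseteq> set_pmf (hist \<pi> \<nu>1 n)" using set_hist_cong[OF se] by auto
  have inj: "inj (\<lambda>(h, a, y). h @ [(a, y)])" by (auto simp: inj_on_def)
  have step: "KL_pmf (bind_pmf (\<pi> h) (\<lambda>a. map_pmf (Pair a) (\<nu>0 (Suc n) a)))
                  (bind_pmf (\<pi> h) (\<lambda>a. map_pmf (Pair a) (\<nu>1 (Suc n) a)))
     = measure_pmf.expectation (\<pi> h) (\<lambda>a. KL_pmf (\<nu>0 (Suc n) a) (\<nu>1 (Suc n) a))" for h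
    by (subst KL_pmf_bind_map_Pair) (use fp fe se in auto)
  have "KL_pmf (hist \<pi> \<nu>0 (Suc n)) (hist \<pi> \<nu>1 (Suc n)) =
     KL_pmf (hist \<pi> \<nu>0 n) (hist \<pi> \<nu>1 n) + measure_pmf.expectation (hist \<pi> \<nu>0 n)
        (\<lambda>h. measure_pmf.expectation (\<pi> h) (\<lambda>a. KL_pmf (\<nu>0 (Suc n) a) (\<nu>1 (Suc n) a)))"
    unfolding hist_Suc_as_map_bind_Pair
    by (subst KL_pmf_map_inj[OF inj], use sh se in force)
       (subst KL_pmf_bind_map_Pair, use fh sh fp fe se in \<open>auto simp: step\<close>)
  also have "measure_pmf.expectation (hist \<pi> \<nu>0 n)
        (\<lambda>h. measure_pmf.expectation (\<pi> h) (\<lambda>a. KL_pmf (\<nu>0 (Suc n) a) (\<nu>1 (Suc n) a)))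
     = measure_pmf.expectation (action \<pi> \<nu>0 (Suc n)) (\<lambda>a. KL_pmf (\<nu>0 (Suc n) a) (\<nu>1 (Suc n) a))"
    unfolding action_def by (subst expectation_bind_pmf_finite) (use fh fp in auto)
  finally show ?thesis .
qed

lemma KL_pmf_hist:
  assumes fp: "\<And>h. finite (set_pmf (\<pi> h))" and fe: "\<And>t a. finite (set_pmf (\<nu>0 t a))"
    and se: "\<And>t a. set_pmf (\<nu>0 t a) = set_pmf (\<nu>1 t a)"
  shows "KL_pmf (hist \<pi> \<nu>0 n) (hist \<pi> \<nu>1 n) =
    (\<Sum>t=1..n. measure_pmf.expectation (action \<pi> \<nu>0 t) (\<lambda>a. KL_pmf (\<nu>0 t a) (\<nu>1 t a)))"
  by (induction n) (simp_all add: KL_pmf_hist_Suc[OF fp fe se] del: hist.simps(2))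

lemma map_hist_nth_action:
  assumes "1 \<le> t" "t \<le> n"
  shows "map_pmf (\<lambda>h. fst (h ! (t-1))) (hist \<pi> \<nu> n) = action \<pi> \<nu> t"
  using assms
proof (induction n)
  case 0 then show ?case by simp
next
  case (Suc n)
  show ?case
  proof (cases "t = Suc n")
    case True
    have "map_pmf (\<lambda>h. fst (h ! (t-1))) (hist \<pi> \<nu> (Suc n)) =
       bind_pmf (hist \<pi> \<nu> n) (\<lambda>h. bind_pmf (\<pi> h) (\<lambda>a. map_pmf (\<lambda>y. a) (\<nu> (Suc n) a)))"
      unfolding True
      by (auto simp: map_bind_pmf map_pmf_comp length_hist nth_append intro!: bind_pmf_cong)
    also have "\<dots> = action \<pi> \<nu> t" unfolding action_def True
      by (simp add: map_pmf_const bind_return_pmf')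
    finally show ?thesis .
  next
    case False
    hence tn: "t \<le> n" using Suc by simp
    hence "t - 1 < n" using Suc.prems by simp
    have "map_pmf (\<lambda>h. fst (h ! (t-1))) (hist \<pi> \<nu> (Suc n)) =
       bind_pmf (hist \<pi> \<nu> n) (\<lambda>h. return_pmf (fst (h ! (t-1))))"
      using tn Suc.prems \<open>t - 1 < n\<close>
      by (auto simp: map_bind_pmf map_pmf_comp length_hist nth_append map_pmf_const bind_pmf_const
          intro!: bind_pmf_cong)
    also have "\<dots> = action \<pi> \<nu> t" using Suc.IH[OF Suc.prems(1) tn]
      by (simp add: map_pmf_def)
    finally show ?thesis .
  qed
qed

lemma expectation_hist_indicator_action:
  assumes "1 \<le> t" "t \<le> n"
  shows "measure_pmf.expectation (hist \<pi> \<nu> n) (\<lambda>h. indicator {k} (fst (h ! (t-1))) :: real)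
         = pmf (action \<pi> \<nu> t) k"
proof -
  have "measure_pmf.expectation (hist \<pi> \<nu> n) (\<lambda>h. indicator {k} (fst (h ! (t-1))) :: real)
     = measure_pmf.expectation (map_pmf (\<lambda>h. fst (h ! (t-1))) (hist \<pi> \<nu> n)) (indicator {k})"
    by (subst integral_map_pmf) (rule refl)
  also have "\<dots> = pmf (action \<pi> \<nu> t) k"
    by (subst map_hist_nth_action[OF assms]) (simp add: measure_pmf_single)
  finally show ?thesis .
qed

section \<open>Change of measure on one block of periods\<close>

text \<open>Period \<open>t\<close> is entry \<open>t - 1\<close> of the history.\<close>
definition pulls :: "nat set \<Rightarrow> nat \<Rightarrow> history \<Rightarrow> real" where
  "pulls B k h = (\<Sum>t\<in>B. indicator {k} (fst (h ! (t-1))))"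

lemma pulls_bounds: "finite B \<Longrightarrow> pulls B k h \<in> {0..real (card B)}"
  unfolding pulls_def using sum_mono[of B "\<lambda>t. indicator {k} (fst (h ! (t-1))) :: real" "\<lambda>_. 1"]
  by (auto simp: sum_nonneg indicator_def)

lemma expectation_pulls:
  assumes "finite (set_pmf (hist \<pi> \<nu> n))" "B \<subseteq> {1..n}"
  shows "measure_pmf.expectation (hist \<pi> \<nu> n) (pulls B k) = (\<Sum>t\<in>B. pmf (action \<pi> \<nu> t) k)"
proof -
  have "measure_pmf.expectation (hist \<pi> \<nu> n) (pulls B k)
      = (\<Sum>t\<in>B. measure_pmf.expectation (hist \<pi> \<nu> n) (\<lambda>h. indicator {k} (fst (h ! (t-1)))))"
    unfolding pulls_def
    by (rule Bochner_Integration.integral_sum) (auto intro: integrable_measure_pmf_finite assms(1))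
  also have "\<dots> = (\<Sum>t\<in>B. pmf (action \<pi> \<nu> t) k)"
    using assms(2) by (intro sum.cong refl expectation_hist_indicator_action) auto
  finally show ?thesis .
qed

lemma KL_pmf_hist_change_one_arm:
  assumes fp: "\<And>h. finite (set_pmf (\<pi> h))"
    and fe: "\<And>t a. finite (set_pmf (\<nu> t a))"
    and se: "\<And>t a. set_pmf (\<nu> t a) = set_pmf (\<nu>' t a)"
    and same: "\<And>t a. t \<in> {1..n} \<Longrightarrow> \<not> (t \<in> B \<and> a = k) \<Longrightarrow> \<nu>' t a = \<nu> t a"
    and inB: "\<And>t. t \<in> B \<Longrightarrow> \<nu> t k = P"
    and inB': "\<And>t. t \<in> B \<Longrightarrow> \<nu>' t k = P'"
    and B: "B \<subseteq> {1..n}"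
  shows "KL_pmf (hist \<pi> \<nu> n) (hist \<pi> \<nu>' n) = KL_pmf P P' * (\<Sum>t\<in>B. pmf (action \<pi> \<nu> t) k)"
proof -
  have "measure_pmf.expectation (action \<pi> \<nu> t) (\<lambda>a. KL_pmf (\<nu> t a) (\<nu>' t a))
      = (if t \<in> B then KL_pmf P P' * pmf (action \<pi> \<nu> t) k else 0)" if t: "t \<in> {1..n}" for t
  proof -
    have "(\<lambda>a. KL_pmf (\<nu> t a) (\<nu>' t a)) = (\<lambda>a. (if t \<in> B then KL_pmf P P' else 0) * indicator {k} a)"
      using same[OF t] inB inB' by (auto simp: fun_eq_iff indicator_def)
    thus ?thesis by (simp add: measure_pmf_single mult_ac)
  qed
  hence "KL_pmf (hist \<pi> \<nu> n) (hist \<pi> \<nu>' n)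
      = (\<Sum>t=1..n. if t \<in> B then KL_pmf P P' * pmf (action \<pi> \<nu> t) k else 0)"
    by (simp add: KL_pmf_hist[OF fp fe se])
  also have "\<dots> = KL_pmf P P' * (\<Sum>t\<in>B. pmf (action \<pi> \<nu> t) k)"
    unfolding sum_distrib_left
    by (subst sum.inter_restrict[symmetric]) (use B in \<open>auto intro!: sum.cong simp: Int_absorb1\<close>)
  finally show ?thesis .
qed

lemma expected_pulls_diff_le_sqrt_KL_pmf:
  assumes fp: "\<And>h. finite (set_pmf (\<pi> h))"
    and fe: "\<And>t a. finite (set_pmf (\<nu> t a))"
    and se: "\<And>t a. set_pmf (\<nu> t a) = set_pmf (\<nu>' t a)"
    and B: "B \<subseteq> {1..T}" "B \<noteq> {}"
    and KL: "KL_pmf (hist \<pi> \<nu> T) (hist \<pi> \<nu>' T) \<le> \<kappa>" and \<kappa>: "\<kappa> > 0"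
  shows "(\<Sum>t\<in>B. pmf (action \<pi> \<nu>' t) k) - (\<Sum>t\<in>B. pmf (action \<pi> \<nu> t) k)
         \<le> real (card B) * sqrt (\<kappa> / 2)"
proof -
  have finB: "finite B" using B finite_subset by blast
  have L: "real (card B) > 0" using B finB by (simp add: card_gt_0_iff)
  have fe': "finite (set_pmf (\<nu>' t a))" for t a using fe[of t a] se[of t a] by simp
  have fin: "finite (set_pmf (hist \<pi> \<nu> T))" by (rule finite_set_hist[OF fp fe])
  have fin': "finite (set_pmf (hist \<pi> \<nu>' T))" by (rule finite_set_hist[OF fp fe'])
  show ?thesis
    using expectation_diff_le_sqrt_KL_pmf[OF fin fin' _ _ L KL \<kappa>, of "pulls B k"]
      set_hist_cong[OF se] pulls_bounds[OF finB]
    by (simp add: expectation_pulls[OF fin B(1)] expectation_pulls[OF fin' B(1)])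
qed

lemma expected_pulls_change_one_arm_le:
  fixes \<pi> :: policy and \<nu>0 \<nu>1 :: env and e :: real and B :: "nat set"
  assumes fp: "\<And>h. finite (set_pmf (\<pi> h))"
    and fe: "\<And>t a. finite (set_pmf (\<nu>0 t a))"
    and se: "\<And>t a. set_pmf (\<nu>0 t a) = set_pmf (\<nu>1 t a)"
    and same: "\<And>t a. t \<in> {1..T} \<Longrightarrow> \<not> (t \<in> B \<and> a = k) \<Longrightarrow> \<nu>1 t a = \<nu>0 t a"
    and inB0: "\<And>t. t \<in> B \<Longrightarrow> \<nu>0 t k = bern_pmf (1/2)"
    and inB1: "\<And>t. t \<in> B \<Longrightarrow> \<nu>1 t k = bern_pmf (1/2 + e)"
    and B: "B \<subseteq> {1..T}" and e: "0 < e" "e \<le> 1/4" and K: "K \<ge> 2"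
    and small: "16 * e\<^sup>2 * real (card B) \<le> real K"
    and rare: "(\<Sum>t\<in>B. pmf (action \<pi> \<nu>0 t) k) \<le> real (card B) / real K"
  shows "(\<Sum>t\<in>B. pmf (action \<pi> \<nu>1 t) k) \<le> real (card B) * (1 + sqrt (ln (4/3))) / 2"
proof (cases "B = {}")
  case False
  define L where "L = real (card B)"
  have L: "L > 0" using False B finite_subset by (fastforce simp: L_def card_gt_0_iff)
  define \<kappa> where "\<kappa> = 8 * ln (4/3) * e\<^sup>2 * (L / real K)"
  have "KL_pmf (hist \<pi> \<nu>0 T) (hist \<pi> \<nu>1 T)
      = KL_pmf (bern_pmf (1/2)) (bern_pmf (1/2 + e)) * (\<Sum>t\<in>B. pmf (action \<pi> \<nu>0 t) k)"
    by (rule KL_pmf_hist_change_one_arm[where \<pi>=\<pi> and \<nu>=\<nu>0 and \<nu>'=\<nu>1 and n=T,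
          OF fp fe se same inB0 inB1 B])
  also have "\<dots> \<le> \<kappa>"
    using KL_pmf_bern_pmf_half_le[of e] e rare unfolding \<kappa>_def
    by (intro mult_mono) (auto simp: L_def sum_nonneg)
  finally have "(\<Sum>t\<in>B. pmf (action \<pi> \<nu>1 t) k) - (\<Sum>t\<in>B. pmf (action \<pi> \<nu>0 t) k) \<le> L * sqrt (\<kappa> / 2)"
    unfolding L_def using e L K False
    by (intro expected_pulls_diff_le_sqrt_KL_pmf[OF fp fe se B]) (auto simp: \<kappa>_def)
  also have "\<dots> \<le> L * (sqrt (ln (4/3)) / 2)"
  proof -
    have "\<kappa> / 2 = ln (4/3) * (16 * e\<^sup>2 * L) / (4 * real K)"
      unfolding \<kappa>_def by (simp add: field_simps)
    also have "\<dots> \<le> ln (4/3) * real K / (4 * real K)"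
      using small unfolding L_def by (intro divide_right_mono mult_left_mono) auto
    finally have "\<kappa> / 2 \<le> ln (4/3) / 4" using K by simp
    hence "sqrt (\<kappa> / 2) \<le> sqrt (ln (4/3) / 4)" by (rule real_sqrt_le_mono)
    also have "\<dots> = sqrt (ln (4/3)) / 2" by (simp add: real_sqrt_divide)
    finally show ?thesis using L by simp
  qed
  moreover have "L / real K \<le> L / 2" using K L by (intro divide_left_mono) auto
  moreover have "L * (1 + sqrt (ln (4/3))) / 2 = L / 2 + L * (sqrt (ln (4/3)) / 2)"
    by (simp add: field_simps)
  ultimately show ?thesis using rare unfolding L_def by linarith
qed simp

section \<open>Windows\<close>

lemma mem_window_iff: "t \<in> window W j \<longleftrightarrow> (\<Sum>i=1..<j. W i) < t \<and> t \<le> (\<Sum>i=1..j. W i)"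
  unfolding window_def by auto

lemma sum_atLeastAtMost_eq_lessThan_plus:
  fixes W :: "nat \<Rightarrow> 'a :: comm_monoid_add"
  shows "1 \<le> j \<Longrightarrow> (\<Sum>i=1..j. W i) = (\<Sum>i=1..<j. W i) + W j"
proof -
  assume j: "1 \<le> j"
  have "(\<Sum>i=1..j. W i) = (\<Sum>i=1..<Suc j. W i)" by (simp only: atLeastLessThanSuc_atLeastAtMost)
  also have "\<dots> = (\<Sum>i=1..<j. W i) + W j" using j by (rule sum.atLeastLessThan_Suc)
  finally show ?thesis .
qed

lemma card_window: "1 \<le> j \<Longrightarrow> card (window W j) = W j"
  unfolding window_def using sum_atLeastAtMost_eq_lessThan_plus[of j W] by simp

lemma last_mem_window: "1 \<le> j \<Longrightarrow> 0 < W j \<Longrightarrow> (\<Sum>i=1..j. W i) \<in> window W j"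
  unfolding mem_window_iff using sum_atLeastAtMost_eq_lessThan_plus[of j W] by simp

lemma window_subset:
  assumes "j \<in> {1..N}" "(\<Sum>j=1..N. W j) = T"
  shows "window W j \<subseteq> {1..T}"
proof -
  have "(\<Sum>i=1..j. W i) \<le> (\<Sum>i=1..N. W i)" using assms(1) by (intro sum_mono2) auto
  thus ?thesis using assms unfolding window_def by auto
qed

lemma sum_windows:
  fixes f :: "nat \<Rightarrow> 'a :: comm_monoid_add"
  shows "(\<Sum>j=1..n. \<Sum>t\<in>window W j. f t) = (\<Sum>t=1..(\<Sum>i=1..n. W i). f t)"
proof (induction n)
  case (Suc n)
  have w: "window W (Suc n) = {(\<Sum>i=1..n. W i) + 1 .. (\<Sum>i=1..n. W i) + W (Suc n)}"
    unfolding window_def by (simp add: atLeastLessThanSuc_atLeastAtMost)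
  have "(\<Sum>t=1..(\<Sum>i=1..n. W i) + W (Suc n). f t) = (\<Sum>t=1..(\<Sum>i=1..n. W i). f t) + (\<Sum>t\<in>window W (Suc n). f t)"
    unfolding w by (rule sum.ub_add_nat) simp
  thus ?case using Suc by simp
qed simp

lemma ex_window:
  assumes "t \<in> {1..(\<Sum>i=1..n. W i)}"
  shows "\<exists>j\<in>{1..n}. t \<in> window W j"
  using assms
proof (induction n)
  case (Suc n)
  show ?case
  proof (cases "t \<le> (\<Sum>i=1..n. W i)")
    case False
    hence "t \<in> window W (Suc n)" using Suc.prems by (simp add: mem_window_iff atLeastLessThanSuc_atLeastAtMost)
    thus ?thesis by auto
  next
    case True
    then obtain j where "j \<in> {1..n}" "t \<in> window W j" using Suc by auto
    thus ?thesis by (intro bexI[of _ j]) auto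
  qed
qed simp

text \<open>The index of the window of period \<open>t\<close>, minus one.\<close>
definition windows_before :: "nat \<Rightarrow> (nat \<Rightarrow> nat) \<Rightarrow> nat \<Rightarrow> nat" where
  "windows_before N W t = card {j \<in> {1..N}. (\<Sum>i=1..j. W i) < t}"

lemma windows_before_mono: "t \<le> t' \<Longrightarrow> windows_before N W t \<le> windows_before N W t'"
  unfolding windows_before_def by (intro card_mono) auto

lemma windows_before_window:
  assumes j: "j \<in> {1..N}" and t: "t \<in> window W j"
  shows "windows_before N W t = j - 1"
proof -
  have "{i \<in> {1..N}. (\<Sum>l=1..i. W l) < t} = {1..<j}"
  proof (intro set_eqI iffI)
    fix i assume i: "i \<in> {i \<in> {1..N}. (\<Sum>l=1..i. W l) < t}"
    have "\<not> j \<le> i"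
    proof
      assume "j \<le> i"
      hence "(\<Sum>l=1..j. W l) \<le> (\<Sum>l=1..i. W l)" by (intro sum_mono2) auto
      thus False using i t by (auto simp: mem_window_iff)
    qed
    thus "i \<in> {1..<j}" using i by auto
  next
    fix i assume i: "i \<in> {1..<j}"
    hence "(\<Sum>l=1..i. W l) \<le> (\<Sum>l=1..<j. W l)" by (intro sum_mono2) auto
    thus "i \<in> {i \<in> {1..N}. (\<Sum>l=1..i. W l) < t}" using i t j by (auto simp: mem_window_iff)
  qed
  thus ?thesis unfolding windows_before_def by simp
qed

lemma windows_before_eq:
  "j \<in> {1..N} \<Longrightarrow> t \<in> window W j \<Longrightarrow> t' \<in> window W j \<Longrightarrow> windows_before N W t = windows_before N W t'"
  by (simp add: windows_before_window)

lemma windows_before_less: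
  assumes "(\<Sum>j=1..N. W j) = T" and t: "t \<in> {1..T}"
  shows "windows_before N W t < N \<and> t \<in> window W (windows_before N W t + 1)"
proof -
  obtain j where j: "j \<in> {1..N}" "t \<in> window W j" using ex_window[of t W N] t assms(1) by auto
  hence "windows_before N W t = j - 1" by (rule windows_before_window)
  thus ?thesis using j by auto
qed

lemma sum_by_windows:
  fixes f :: "nat \<Rightarrow> real"
  assumes "(\<Sum>j=1..N. W j) = T"
  shows "(\<Sum>t=1..T. f (windows_before N W t)) = (\<Sum>j=1..N. real (W j) * f (j - 1))"
proof -
  have "(\<Sum>t=1..T. f (windows_before N W t)) = (\<Sum>j=1..N. \<Sum>t\<in>window W j. f (windows_before N W t))"
    using sum_windows[where f="\<lambda>t. f (windows_before N W t)" and W=W and n=N] assms by simp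
  also have "\<dots> = (\<Sum>j=1..N. \<Sum>t\<in>window W j. f (j - 1))"
    by (intro sum.cong refl) (simp add: windows_before_window)
  also have "\<dots> = (\<Sum>j=1..N. real (W j) * f (j - 1))"
    by (intro sum.cong refl) (simp add: card_window)
  finally show ?thesis .
qed

section \<open>Regret of admissible environments\<close>

lemma mean_in_unit_interval:
  assumes "set_pmf (\<nu> t k) \<subseteq> {0..1}"
  shows "0 \<le> mean \<nu> t k \<and> mean \<nu> t k \<le> 1"
proof
  show "0 \<le> mean \<nu> t k" unfolding mean_def
    by (intro integral_nonneg_AE) (use assms in \<open>auto simp: AE_measure_pmf_iff\<close>)
  have "integrable (measure_pmf (\<nu> t k)) (\<lambda>y. y)"
    by (rule measure_pmf.integrable_const_bound[where B=1]) (use assms in \<open>auto simp: AE_measure_pmf_iff\<close>)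
  thus "mean \<nu> t k \<le> 1" unfolding mean_def
    by (rule measure_pmf.integral_le_const) (use assms in \<open>auto simp: AE_measure_pmf_iff\<close>)
qed

lemma regret_le_horizon:
  assumes pol: "is_policy K \<pi>" and adm: "admissible K T V \<nu>" and K: "K \<ge> 1"
    and sumT: "(\<Sum>j=1..N. W j) = T"
  shows "regret K T N W \<pi> \<nu> \<le> real T"
proof -
  have mean: "0 \<le> mean \<nu> t k \<and> mean \<nu> t k \<le> 1" if "t \<in> {1..T}" "k \<in> {1..K}" for t k
    using adm that unfolding admissible_def by (intro mean_in_unit_interval) auto
  have "Max ((\<lambda>k. \<Sum>t\<in>window W j. mean \<nu> t k) ` {1..K}) \<le> real (card (window W j))"
    if j: "j \<in> {1..N}" for j
  proof -
    have "(\<Sum>t\<in>window W j. mean \<nu> t k) \<le> (\<Sum>t\<in>window W j. 1)" if "k \<in> {1..K}" for k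
      using mean window_subset[OF j sumT] that by (intro sum_mono) auto
    thus ?thesis using K by (subst Max_le_iff) auto
  qed
  hence "(\<Sum>j=1..N. Max ((\<lambda>k. \<Sum>t\<in>window W j. mean \<nu> t k) ` {1..K})) \<le> (\<Sum>j=1..N. real (card (window W j)))"
    by (rule sum_mono)
  also have "\<dots> = real T"
    using sum_windows[where f="\<lambda>_. 1::real" and W=W and n=N] sumT by (simp flip: of_nat_sum)
  finally have "(\<Sum>j=1..N. Max ((\<lambda>k. \<Sum>t\<in>window W j. mean \<nu> t k) ` {1..K})) \<le> real T" .
  moreover have "expected_reward \<pi> \<nu> T \<ge> 0"
  proof -
    have "0 \<le> mean \<nu> t a" if "t \<in> {1..T}" "a \<in> set_pmf (action \<pi> \<nu> t)" for t a
      using mean[OF that(1)] set_action_subset[OF pol] that(2) by blast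
    thus ?thesis unfolding expected_reward_def
      by (intro sum_nonneg integral_nonneg_AE) (auto simp: AE_measure_pmf_iff)
  qed
  ultimately show ?thesis unfolding regret_def by linarith
qed

lemma regret_le_worst_regret:
  assumes "is_policy K \<pi>" "admissible K T V \<nu>" "K \<ge> 1" "(\<Sum>j=1..N. W j) = T"
  shows "regret K T N W \<pi> \<nu> \<le> worst_regret K T N W V \<pi>"
  unfolding worst_regret_def
  using assms regret_le_horizon[OF assms(1) _ assms(3,4)]
  by (intro cSUP_upper bdd_aboveI2) auto

lemma sum_changes_le:
  fixes f :: "nat \<Rightarrow> nat" and c :: real
  assumes mono: "\<And>t t'. 1 \<le> t \<Longrightarrow> t \<le> t' \<Longrightarrow> t' \<le> T \<Longrightarrow> f t \<le> f t'" and c: "c \<ge> 0"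
  shows "(\<Sum>t=1..<T. if f t \<noteq> f (t+1) then c else 0) \<le> c * real (f T - f 1)"
  using mono
proof (induction T)
  case (Suc T)
  show ?case
  proof (cases "T = 0")
    case False
    have IH: "(\<Sum>t=1..<T. if f t \<noteq> f (t+1) then c else 0) \<le> c * real (f T - f 1)"
      by (rule Suc.IH) (use Suc.prems in auto)
    have f: "f 1 \<le> f T" "f T \<le> f (Suc T)" using Suc.prems False by auto
    have "(if f T \<noteq> f (T+1) then c else 0) \<le> c * real (f (Suc T) - f T)"
    proof (cases "f T = f (T+1)")
      case False
      hence "1 \<le> real (f (Suc T) - f T)" using f by simp
      hence "c * 1 \<le> c * real (f (Suc T) - f T)" using c by (intro mult_left_mono)
      thus ?thesis using False by simp
    qed (use c in simp)
    hence "(\<Sum>t=1..<Suc T. if f t \<noteq> f (t+1) then c else 0) \<le> c * real (f T - f 1) + c * real (f (Suc T) - f T)"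
      using IH False by simp
    also have "\<dots> = c * real (f (Suc T) - f 1)" using f by (simp add: algebra_simps of_nat_diff)
    finally show ?thesis .
  qed (use c in simp)
qed (use c in simp)

section \<open>Environments with one good arm per block\<close>

text \<open>There is no arm \<open>0\<close>, so \<open>g m = 0\<close> means that block \<open>m\<close> has no good arm.\<close>
definition gap_mean :: "(nat \<Rightarrow> nat) \<Rightarrow> (nat \<Rightarrow> real) \<Rightarrow> (nat \<Rightarrow> nat) \<Rightarrow> nat \<Rightarrow> nat \<Rightarrow> real" where
  "gap_mean blk eps g t a = 1/2 + (if 0 < a \<and> a = g (blk t) then eps (blk t) else 0)"

definition gap_env :: "(nat \<Rightarrow> nat) \<Rightarrow> (nat \<Rightarrow> real) \<Rightarrow> (nat \<Rightarrow> nat) \<Rightarrow> env" where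
  "gap_env blk eps g t a = bern_pmf (gap_mean blk eps g t a)"

definition block :: "nat \<Rightarrow> (nat \<Rightarrow> nat) \<Rightarrow> nat \<Rightarrow> nat set" where
  "block T blk m = {t \<in> {1..T}. blk t = m}"

lemma expectation_gap_mean:
  assumes "0 < g (blk t)"
  shows "measure_pmf.expectation p (gap_mean blk eps g t) = 1/2 + eps (blk t) * pmf p (g (blk t))"
proof -
  have "gap_mean blk eps g t = (\<lambda>a. 1/2 + eps (blk t) * indicator {g (blk t)} a)"
    using assms by (auto simp: gap_mean_def indicator_def fun_eq_iff)
  moreover have "integrable (measure_pmf p) (indicator {g (blk t)} :: _ \<Rightarrow> real)"
    by (rule integrable_real_indicator) (auto simp: measure_pmf.emeasure_finite less_top[symmetric])
  ultimately show ?thesis by (simp add: measure_pmf_single)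
qed

locale block_instance =
  fixes K T :: nat and \<pi> :: policy and blk :: "nat \<Rightarrow> nat" and eps :: "nat \<Rightarrow> real"
  assumes K: "K \<ge> 2" and policy: "is_policy K \<pi>"
    and blk_mono: "\<And>t t'. 1 \<le> t \<Longrightarrow> t \<le> t' \<Longrightarrow> t' \<le> T \<Longrightarrow> blk t \<le> blk t'"
    and eps_pos: "\<And>m. 0 < eps m" and eps_le: "\<And>m. eps m \<le> 1/4"
    and block_small: "\<And>m. 16 * (eps m)\<^sup>2 * real (card (block T blk m)) \<le> real K"
begin

lemma set_gap_env: "set_pmf (gap_env blk eps g t a) = {0, 1}"
  unfolding gap_env_def gap_mean_def using eps_pos[of "blk t"] eps_le[of "blk t"]
  by (intro set_bern_pmf) auto

lemma mean_gap_env: "mean (gap_env blk eps g) t a = gap_mean blk eps g t a"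
  unfolding mean_def gap_env_def using eps_pos[of "blk t"] eps_le[of "blk t"]
  by (intro expectation_bern_pmf) (auto simp: gap_mean_def)

lemma admissible_gap_env:
  assumes var: "(\<Sum>t=1..<T. if blk t \<noteq> blk (t+1) then eps (blk t) + eps (blk (t+1)) else 0) \<le> V"
  shows "admissible K T V (gap_env blk eps g)"
  unfolding admissible_def
proof (intro conjI ballI)
  show "set_pmf (gap_env blk eps g t k) \<subseteq> {0..1}" for t k
    by (simp add: set_gap_env)
  have "Max ((\<lambda>k. \<bar>mean (gap_env blk eps g) t k - mean (gap_env blk eps g) (t + 1) k\<bar>) ` {1..K})
      \<le> (if blk t \<noteq> blk (t+1) then eps (blk t) + eps (blk (t+1)) else 0)" for t
    using K eps_pos[of "blk t"] eps_pos[of "blk (t+1)"]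
    by (subst Max_le_iff) (auto simp: mean_gap_env gap_mean_def)
  hence "(\<Sum>t=1..<T. Max ((\<lambda>k. \<bar>mean (gap_env blk eps g) t k - mean (gap_env blk eps g) (t + 1) k\<bar>) ` {1..K}))
     \<le> (\<Sum>t=1..<T. if blk t \<noteq> blk (t+1) then eps (blk t) + eps (blk (t+1)) else 0)"
    by (rule sum_mono)
  thus "(\<Sum>t=1..<T. Max ((\<lambda>k. \<bar>mean (gap_env blk eps g) t k - mean (gap_env blk eps g) (t + 1) k\<bar>) ` {1..K})) \<le> V"
    using var by linarith
qed

text \<open>The good arm of block \<open>m\<close> is chosen against the environment in which the blocks
  \<open>m, m + 1, \<dots>\<close> have no good arm. The policy cannot see the future, so the choices made for
  later blocks do not change its behaviour up to the end of block \<open>m\<close>.\<close>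
definition rarely_pulled_arm :: "(nat \<Rightarrow> nat) \<Rightarrow> nat \<Rightarrow> nat" where
  "rarely_pulled_arm g m = (SOME k. k \<in> {1..K} \<and>
     (\<Sum>t\<in>block T blk m. pmf (action \<pi> (gap_env blk eps g) t) k) \<le> real (card (block T blk m)) / real K)"

fun good_arms :: "nat \<Rightarrow> nat \<Rightarrow> nat" where
  "good_arms 0 = (\<lambda>_. 0)"
| "good_arms (Suc m) = (good_arms m)(m := rarely_pulled_arm (good_arms m) m)"

definition good_arm :: "nat \<Rightarrow> nat" where
  "good_arm = good_arms (Suc (blk T))"

lemma good_arms_undecided: "m \<le> l \<Longrightarrow> good_arms m l = 0"
  by (induction m) auto

lemma good_arms_stable: "l < m \<Longrightarrow> m \<le> m' \<Longrightarrow> good_arms m' l = good_arms m l"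
  by (induction m' rule: nat.induct) (auto simp: le_Suc_eq)

lemma rarely_pulled_arm_spec:
  "rarely_pulled_arm g m \<in> {1..K} \<and>
     (\<Sum>t\<in>block T blk m. pmf (action \<pi> (gap_env blk eps g) t) (rarely_pulled_arm g m))
        \<le> real (card (block T blk m)) / real K"
proof -
  let ?B = "block T blk m"
  let ?p = "\<lambda>t k. pmf (action \<pi> (gap_env blk eps g) t) k"
  have "\<exists>k. k \<in> {1..K} \<and> (\<Sum>t\<in>?B. ?p t k) \<le> real (card ?B) / real K"
  proof (rule ccontr)
    assume "\<not> ?thesis"
    hence "(\<Sum>k\<in>{1..K}. real (card ?B) / real K) < (\<Sum>k\<in>{1..K}. \<Sum>t\<in>?B. ?p t k)"
      using K by (intro sum_strict_mono) auto
    also have "\<dots> = (\<Sum>t\<in>?B. \<Sum>k\<in>{1..K}. ?p t k)"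
      by (rule sum.swap)
    also have "\<dots> \<le> (\<Sum>t\<in>?B. 1)"
      by (intro sum_mono) (simp add: measure_measure_pmf_finite[symmetric])
    finally show False using K by simp
  qed
  thus ?thesis unfolding rarely_pulled_arm_def by (rule someI_ex)
qed

lemma good_arm_block: "m \<le> blk T \<Longrightarrow> good_arm m = good_arms (Suc m) m"
  unfolding good_arm_def by (intro good_arms_stable) auto

lemma good_arm_in_range: "t \<in> {1..T} \<Longrightarrow> good_arm (blk t) \<in> {1..K}"
  using good_arm_block[of "blk t"] blk_mono[of t T] rarely_pulled_arm_spec by auto

lemma expected_pulls_good_arm_le:
  assumes m: "m \<le> blk T"
  shows "(\<Sum>t\<in>block T blk m. pmf (action \<pi> (gap_env blk eps good_arm) t) (good_arm m))
         \<le> real (card (block T blk m)) * (1 + sqrt (ln (4/3))) / 2"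
proof -
  let ?B = "block T blk m"
  define g0 where "g0 = good_arms m"
  define k where "k = rarely_pulled_arm g0 m"
  define g1 where "g1 = g0(m := k)"
  have g1: "g1 = good_arms (Suc m)" unfolding g1_def k_def g0_def by simp
  have g0m: "g0 m = 0" unfolding g0_def by (rule good_arms_undecided) simp
  have k: "k \<in> {1..K}" "(\<Sum>t\<in>?B. pmf (action \<pi> (gap_env blk eps g0) t) k) \<le> real (card ?B) / real K"
    unfolding k_def using rarely_pulled_arm_spec by auto
  have fp: "finite (set_pmf (\<pi> h))" for h
    using policy unfolding is_policy_def by (meson finite_atLeastAtMost finite_subset)
  have pulls: "(\<Sum>t\<in>?B. pmf (action \<pi> (gap_env blk eps g1) t) k) \<le> real (card ?B) * (1 + sqrt (ln (4/3))) / 2"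
  proof (rule expected_pulls_change_one_arm_le[where T = T and K = K and e = "eps m"])
    show "gap_env blk eps g1 t a = gap_env blk eps g0 t a" if "t \<in> {1..T}" "\<not> (t \<in> ?B \<and> a = k)" for t a
      using that g0m unfolding gap_env_def gap_mean_def g1_def block_def by auto
    show "gap_env blk eps g0 t k = bern_pmf (1/2)" if "t \<in> ?B" for t
      using that g0m k unfolding gap_env_def gap_mean_def block_def by auto
    show "gap_env blk eps g1 t k = bern_pmf (1/2 + eps m)" if "t \<in> ?B" for t
      using that k unfolding gap_env_def gap_mean_def block_def g1_def by auto
  qed (use fp k K eps_pos eps_le block_small in \<open>auto simp: set_gap_env block_def\<close>)
  have "good_arm m = k" using good_arm_block[OF m] unfolding g1[symmetric] g1_def by simp
  moreover have "action \<pi> (gap_env blk eps good_arm) t = action \<pi> (gap_env blk eps g1) t" if t: "t \<in> ?B" for t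
  proof (rule action_cong)
    fix t' assume t': "t' \<in> {1..<t}"
    have "blk t' \<le> blk t" using t t' unfolding block_def by (intro blk_mono) auto
    hence "good_arm (blk t') = g1 (blk t')"
      using t m unfolding g1 good_arm_def block_def by (intro good_arms_stable) auto
    thus "gap_env blk eps good_arm t' = gap_env blk eps g1 t'"
      unfolding gap_env_def gap_mean_def by (auto simp: fun_eq_iff)
  qed
  ultimately show ?thesis using pulls by simp
qed

lemma block_regret_ge:
  assumes m: "m \<le> blk T"
  shows "(\<Sum>t\<in>block T blk m. eps (blk t) * ((1 - sqrt (ln (4/3))) / 2))
      \<le> (\<Sum>t\<in>block T blk m. eps (blk t)
            * (1 - pmf (action \<pi> (gap_env blk eps good_arm) t) (good_arm (blk t))))"
proof -
  let ?s = "sqrt (ln (4/3))" and ?B = "block T blk m"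
  let ?p = "\<lambda>t. pmf (action \<pi> (gap_env blk eps good_arm) t) (good_arm m)"
  have blk: "t \<in> ?B \<Longrightarrow> blk t = m" for t unfolding block_def by auto
  have "real (card ?B) * ((1 - ?s) / 2) = real (card ?B) - real (card ?B) * (1 + ?s) / 2"
    by (simp add: field_simps)
  hence "real (card ?B) * ((1 - ?s) / 2) \<le> real (card ?B) - (\<Sum>t\<in>?B. ?p t)"
    using expected_pulls_good_arm_le[OF m] by linarith
  hence "eps m * (real (card ?B) * ((1 - ?s) / 2)) \<le> eps m * (real (card ?B) - (\<Sum>t\<in>?B. ?p t))"
    using eps_pos[of m] by (intro mult_left_mono) auto
  moreover have "(\<Sum>t\<in>?B. eps (blk t) * ((1 - ?s) / 2)) = eps m * (real (card ?B) * ((1 - ?s) / 2))"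
    by (simp add: blk)
  moreover have "(\<Sum>t\<in>?B. eps (blk t) * (1 - pmf (action \<pi> (gap_env blk eps good_arm) t) (good_arm (blk t))))
      = eps m * (real (card ?B) - (\<Sum>t\<in>?B. ?p t))"
    by (simp add: blk right_diff_distrib sum_subtractf sum_distrib_left cong: sum.cong)
  ultimately show ?thesis by simp
qed

lemma gap_regret_ge:
  "(\<Sum>t=1..T. eps (blk t) * ((1 - sqrt (ln (4/3))) / 2)) \<le>
   (\<Sum>t=1..T. gap_mean blk eps good_arm t (good_arm (blk t))
      - measure_pmf.expectation (action \<pi> (gap_env blk eps good_arm) t) (gap_mean blk eps good_arm t))"
proof -
  let ?s = "sqrt (ln (4/3))"
  let ?p = "\<lambda>t. pmf (action \<pi> (gap_env blk eps good_arm) t) (good_arm (blk t))"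
  have "(\<Sum>t=1..T. eps (blk t) * ((1 - ?s) / 2))
      = (\<Sum>m\<in>blk ` {1..T}. \<Sum>t\<in>block T blk m. eps (blk t) * ((1 - ?s) / 2))"
    unfolding block_def by (rule sum.group[symmetric]) auto
  also have "\<dots> \<le> (\<Sum>m\<in>blk ` {1..T}. \<Sum>t\<in>block T blk m. eps (blk t) * (1 - ?p t))"
    using blk_mono by (intro sum_mono block_regret_ge) auto
  also have "\<dots> = (\<Sum>t=1..T. eps (blk t) * (1 - ?p t))"
    unfolding block_def by (rule sum.group) auto
  also have "\<dots> = (\<Sum>t=1..T. gap_mean blk eps good_arm t (good_arm (blk t))
      - measure_pmf.expectation (action \<pi> (gap_env blk eps good_arm) t) (gap_mean blk eps good_arm t))"
  proof (intro sum.cong refl)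
    fix t assume "t \<in> {1..T}"
    hence "0 < good_arm (blk t)" using good_arm_in_range by fastforce
    thus "eps (blk t) * (1 - ?p t) = gap_mean blk eps good_arm t (good_arm (blk t))
        - measure_pmf.expectation (action \<pi> (gap_env blk eps good_arm) t) (gap_mean blk eps good_arm t)"
      by (simp add: expectation_gap_mean gap_mean_def algebra_simps)
  qed
  finally show ?thesis .
qed

lemma regret_gap_env_ge:
  assumes Wpos: "\<forall>j\<in>{1..N}. W j > 0" and sumT: "(\<Sum>j=1..N. W j) = T"
    and const: "\<And>j t t'. j \<in> {1..N} \<Longrightarrow> t \<in> window W j \<Longrightarrow> t' \<in> window W j \<Longrightarrow> blk t = blk t'"
  shows "(\<Sum>t=1..T. gap_mean blk eps good_arm t (good_arm (blk t))
      - measure_pmf.expectation (action \<pi> (gap_env blk eps good_arm) t) (gap_mean blk eps good_arm t))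
     \<le> regret K T N W \<pi> (gap_env blk eps good_arm)"
proof -
  let ?\<nu> = "gap_env blk eps good_arm"
  have "(\<Sum>t\<in>window W j. gap_mean blk eps good_arm t (good_arm (blk t)))
      \<le> Max ((\<lambda>k. \<Sum>t\<in>window W j. mean ?\<nu> t k) ` {1..K})" if j: "j \<in> {1..N}" for j
  proof -
    define e where "e = (\<Sum>i=1..j. W i)"
    have e: "e \<in> window W j" unfolding e_def using Wpos j by (intro last_mem_window) auto
    hence "good_arm (blk e) \<in> {1..K}" using good_arm_in_range window_subset[OF j sumT] by auto
    moreover have "(\<Sum>t\<in>window W j. gap_mean blk eps good_arm t (good_arm (blk t)))
        = (\<Sum>t\<in>window W j. mean ?\<nu> t (good_arm (blk e)))"
      using const[OF j _ e] by (intro sum.cong refl) (simp add: mean_gap_env)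
    ultimately show ?thesis by (intro Max_ge) auto
  qed
  hence "(\<Sum>j=1..N. \<Sum>t\<in>window W j. gap_mean blk eps good_arm t (good_arm (blk t)))
      \<le> (\<Sum>j=1..N. Max ((\<lambda>k. \<Sum>t\<in>window W j. mean ?\<nu> t k) ` {1..K}))"
    by (rule sum_mono)
  hence "(\<Sum>t=1..T. gap_mean blk eps good_arm t (good_arm (blk t)))
      \<le> (\<Sum>j=1..N. Max ((\<lambda>k. \<Sum>t\<in>window W j. mean ?\<nu> t k) ` {1..K}))"
    by (simp only: sum_windows sumT)
  moreover have "expected_reward \<pi> ?\<nu> T
      = (\<Sum>t=1..T. measure_pmf.expectation (action \<pi> ?\<nu> t) (gap_mean blk eps good_arm t))"
    unfolding expected_reward_def by (simp add: mean_gap_env[abs_def])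
  ultimately show ?thesis unfolding regret_def sum_subtractf by linarith
qed

theorem worst_regret_ge_block_gaps:
  assumes Wpos: "\<forall>j\<in>{1..N}. W j > 0" and sumT: "(\<Sum>j=1..N. W j) = T"
    and const: "\<And>j t t'. j \<in> {1..N} \<Longrightarrow> t \<in> window W j \<Longrightarrow> t' \<in> window W j \<Longrightarrow> blk t = blk t'"
    and var: "(\<Sum>t=1..<T. if blk t \<noteq> blk (t+1) then eps (blk t) + eps (blk (t+1)) else 0) \<le> V"
  shows "(\<Sum>t=1..T. eps (blk t) * ((1 - sqrt (ln (4/3))) / 2)) \<le> worst_regret K T N W V \<pi>"
proof -
  have "regret K T N W \<pi> (gap_env blk eps good_arm) \<le> worst_regret K T N W V \<pi>"
    using policy admissible_gap_env[OF var] K sumT by (intro regret_le_worst_regret) auto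
  moreover have "(\<Sum>t=1..T. gap_mean blk eps good_arm t (good_arm (blk t))
      - measure_pmf.expectation (action \<pi> (gap_env blk eps good_arm) t) (gap_mean blk eps good_arm t))
     \<le> regret K T N W \<pi> (gap_env blk eps good_arm)"
    by (rule regret_gap_env_ge[OF Wpos sumT]) (fact const)
  ultimately show ?thesis using gap_regret_ge by linarith
qed

end

section \<open>The two regimes\<close>

lemma powr_one_third_cube: "0 < u \<Longrightarrow> (u powr (1/3)) ^ 3 = (u :: real)"
  by (simp add: powr_realpow[of _ 3, symmetric] powr_powr)

lemma powr_two_thirds: "0 < u \<Longrightarrow> u powr (2/3) = ((u :: real) powr (1/3))\<^sup>2"
  by (simp add: powr_realpow[of _ 2, symmetric] powr_powr)

lemma regime_scales:
  fixes K T V :: real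
  assumes K: "0 < K" and V: "0 < V" and VT: "V \<le> T / K"
  defines "D \<equiv> K powr (1/3) * (T / V) powr (2/3)" and "a \<equiv> (K * V) powr (1/3) / T powr (1/3)"
  shows "K \<le> D" and "0 < a" and "a \<le> 1" and "a\<^sup>2 * D = K" and "a * T = V * D"
    and "T * a = (K * V) powr (1/3) * T powr (2/3)"
proof -
  have "0 < T / K" using V VT by linarith
  hence T: "0 < T" using K by (simp add: zero_less_divide_iff)
  define x y z where "x = K powr (1/3)" and "y = V powr (1/3)" and "z = T powr (1/3)"
  have pos: "x > 0" "y > 0" "z > 0" using K V T by (auto simp: x_def y_def z_def)
  have x3: "x ^ 3 = K" and y3: "y ^ 3 = V" and z3: "z ^ 3 = T"
    using K V T by (auto simp: x_def y_def z_def powr_one_third_cube)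
  have Dxyz: "D = x * (z / y)\<^sup>2"
    unfolding D_def x_def y_def z_def using T V by (simp add: powr_two_thirds powr_divide power_divide)
  have axyz: "a = x * y / z"
    unfolding a_def x_def y_def z_def using K V by (simp add: powr_mult)
  show "0 < a" using pos axyz by simp
  show "a\<^sup>2 * D = K" unfolding axyz Dxyz x3[symmetric] using pos
    by (simp add: field_simps power2_eq_square power3_eq_cube)
  show "a * T = V * D" unfolding axyz Dxyz z3[symmetric] y3[symmetric] using pos
    by (simp add: field_simps power2_eq_square power3_eq_cube)
  have "T * a = x * y * z\<^sup>2"
    unfolding axyz z3[symmetric] using pos by (simp add: power2_eq_square power3_eq_cube)
  also have "\<dots> = (K * V) powr (1/3) * T powr (2/3)"
    unfolding x_def y_def z_def using K V T by (simp add: powr_mult powr_two_thirds)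
  finally show "T * a = (K * V) powr (1/3) * T powr (2/3)" .
  have "a ^ 3 = K * V / T" unfolding axyz x3[symmetric] y3[symmetric] z3[symmetric]
    by (simp add: power_divide power_mult_distrib)
  also have "\<dots> \<le> 1" using VT K T by (simp add: field_simps)
  finally show "a \<le> 1" using \<open>0 < a\<close> by (simp add: power_le_one_iff)
  have "K \<le> T / V" using VT K V by (simp add: field_simps)
  hence "K powr (1/3) * K powr (2/3) \<le> K powr (1/3) * (T / V) powr (2/3)"
    using K by (intro mult_left_mono powr_mono2) auto
  thus "K \<le> D" unfolding D_def using K by (simp add: powr_add[symmetric])
qed

lemma card_le_of_open_interval:
  fixes B :: "nat set" and c L :: real
  assumes c: "0 \<le> c" and L: "0 \<le> L" and B: "\<And>t. t \<in> B \<Longrightarrow> c < real t \<and> real t < c + L"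
  shows "real (card B) \<le> L + 1"
proof -
  define A where "A = nat \<lfloor>c\<rfloor>"
  define C where "C = nat \<lfloor>L\<rfloor> + 1"
  have A: "real A = of_int \<lfloor>c\<rfloor>" and C: "real C = of_int \<lfloor>L\<rfloor> + 1"
    unfolding A_def C_def using c L by auto
  have "B \<subseteq> {A+1..A+C}"
  proof
    fix t assume t: "t \<in> B"
    have "real A < real t" using B[OF t] A of_int_floor_le[of c] by linarith
    moreover have "real t < real A + 1 + L" using B[OF t] A real_of_int_floor_add_one_gt[of c] by linarith
    hence "of_int (int t - int A - 1) \<le> L" by simp
    hence "int t - int A - 1 \<le> \<lfloor>L\<rfloor>" by (simp only: le_floor_iff)
    ultimately show "t \<in> {A+1..A+C}" unfolding C_def using L by simp
  qed
  hence "card B \<le> card {A+1..A+C}" by (intro card_mono) auto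
  hence "real (card B) \<le> real C" by simp
  also have "\<dots> \<le> L + 1" using C of_int_floor_le[of L] by linarith
  finally show ?thesis .
qed

text \<open>Consecutive windows grouped into blocks of length about \<open>D\<close>: the block of period \<open>t\<close>
  is determined by the start of its window.\<close>
definition window_group :: "real \<Rightarrow> nat \<Rightarrow> (nat \<Rightarrow> nat) \<Rightarrow> nat \<Rightarrow> nat" where
  "window_group D N W t = nat \<lfloor>real (\<Sum>i=1..windows_before N W t. W i) / D\<rfloor>"

lemma window_group_mono: "0 < D \<Longrightarrow> t \<le> t' \<Longrightarrow> window_group D N W t \<le> window_group D N W t'"
  unfolding window_group_def
  using windows_before_mono[of t t' N W]
  by (intro nat_mono floor_mono divide_right_mono of_nat_mono sum_mono2) auto

lemma window_group_le:
  assumes D: "0 < D" and sumT: "(\<Sum>j=1..N. W j) = T" and t: "t \<in> {1..T}"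
  shows "real (window_group D N W t) \<le> real T / D"
proof -
  have "windows_before N W t < N" using windows_before_less[OF sumT t] by simp
  hence "(\<Sum>i=1..windows_before N W t. W i) \<le> T" unfolding sumT[symmetric] by (intro sum_mono2) auto
  hence "real (\<Sum>i=1..windows_before N W t. W i) \<le> real T" by (simp only: of_nat_le_iff)
  hence "real (\<Sum>i=1..windows_before N W t. W i) / D \<le> real T / D" using D by (intro divide_right_mono) auto
  moreover have "0 \<le> real (\<Sum>i=1..windows_before N W t. W i) / D"
    using D by (intro divide_nonneg_pos of_nat_0_le_iff)
  ultimately show ?thesis unfolding window_group_def using of_int_floor_le by (simp add: of_nat_nat) linarith
qed

lemma card_block_window_group_le:
  assumes D: "1 \<le> D" and sumT: "(\<Sum>j=1..N. W j) = T" and short: "\<forall>i\<in>{1..N}. real (W i) \<le> D"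
  shows "real (card (block T (window_group D N W) m)) \<le> 3 * D"
proof -
  have "real (card (block T (window_group D N W) m)) \<le> 2 * D + 1"
  proof (rule card_le_of_open_interval)
    fix t assume "t \<in> block T (window_group D N W) m"
    hence t: "t \<in> {1..T}" and m: "m = window_group D N W t" unfolding block_def by auto
    define r where "r = windows_before N W t"
    define S where "S = real (\<Sum>i=1..r. W i)"
    have r: "r < N" "t \<in> window W (r+1)" using windows_before_less[OF sumT t] unfolding r_def by auto
    hence "(\<Sum>i=1..r. W i) < t" "t \<le> (\<Sum>i=1..r. W i) + W (r+1)"
      unfolding mem_window_iff by (auto simp: atLeastLessThanSuc_atLeastAtMost)
    hence "S < real t" "real t \<le> S + real (W (r+1))"
      unfolding S_def by (simp_all only: of_nat_less_iff of_nat_add[symmetric] of_nat_le_iff)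
    moreover have "real (W (r+1)) \<le> D" using short r by auto
    moreover have "0 \<le> S / D" unfolding S_def using D by (intro divide_nonneg_pos of_nat_0_le_iff) auto
    hence "real m = of_int \<lfloor>S / D\<rfloor>"
      using m unfolding window_group_def r_def[symmetric] S_def[symmetric] by (simp add: S_def)
    hence "real m \<le> S / D" "S / D < real m + 1"
      using of_int_floor_le real_of_int_floor_add_one_gt by simp_all
    hence "real m * D \<le> S" "S < real m * D + D" using D by (auto simp: field_simps)
    ultimately show "real m * D < real t \<and> real t < real m * D + 2 * D" by linarith
  qed (use D in auto)
  thus ?thesis using D by linarith
qed

lemma window_group_changes_le:
  assumes D: "0 < D" and sumT: "(\<Sum>j=1..N. W j) = T" and T: "1 \<le> T" and c: "0 \<le> c"
  shows "(\<Sum>t=1..<T. if window_group D N W t \<noteq> window_group D N W (t+1) then c else 0) \<le> c * (real T / D)"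
proof -
  have "(\<Sum>t=1..<T. if window_group D N W t \<noteq> window_group D N W (t+1) then c else 0)
      \<le> c * real (window_group D N W T - window_group D N W 1)"
    using D c by (intro sum_changes_le window_group_mono) auto
  also have "\<dots> \<le> c * (real T / D)"
    using window_group_le[where t=T, OF D sumT] T c by (intro mult_left_mono) auto
  finally show ?thesis .
qed

lemma block_instance_window_group:
  assumes K: "K \<ge> 2" and policy: "is_policy K \<pi>" and D: "1 \<le> D"
    and sumT: "(\<Sum>j=1..N. W j) = T" and short: "\<forall>i\<in>{1..N}. real (W i) \<le> D"
    and e: "0 < e" "e \<le> 1/4" "48 * e\<^sup>2 * D \<le> real K"
  shows "block_instance K T \<pi> (window_group D N W) (\<lambda>_. e)"
proof
  show "window_group D N W t \<le> window_group D N W t'" if "t \<le> t'" for t t'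
    using D that by (intro window_group_mono) auto
  fix m
  have "16 * e\<^sup>2 * real (card (block T (window_group D N W) m)) \<le> 16 * e\<^sup>2 * (3 * D)"
    using card_block_window_group_le[OF D sumT short] by (intro mult_left_mono) auto
  also have "\<dots> = 48 * e\<^sup>2 * D" by simp
  finally show "16 * e\<^sup>2 * real (card (block T (window_group D N W) m)) \<le> real K"
    using e(3) by linarith
qed (use K policy e in auto)

lemma worst_regret_short_windows:
  fixes K T N :: nat and V :: real and W :: "nat \<Rightarrow> nat" and \<pi> :: policy
  assumes K: "K \<ge> 2" and TK: "T \<ge> K" and V: "0 < V" and VT: "V \<le> real T / real K"
    and Wpos: "\<forall>j\<in>{1..N}. W j > 0" and sumT: "(\<Sum>j=1..N. W j) = T" and policy: "is_policy K \<pi>"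
    and short: "\<forall>i\<in>{1..N}. real (W i) \<le> real K powr (1/3) * (real T / V) powr (2/3)"
  shows "(1/8 - sqrt (ln (4/3)) / 8) / 3 * (real K * V) powr (1/3) * real T powr (2/3)
         \<le> worst_regret K T N W V \<pi>"
proof -
  define D where "D = real K powr (1/3) * (real T / V) powr (2/3)"
  define a where "a = (real K * V) powr (1/3) / real T powr (1/3)"
  have K0: "0 < real K" using K by simp
  note scales = regime_scales[OF K0 V VT, folded D_def a_def]
  have D: "1 \<le> D" using scales(1) K by linarith
  interpret block_instance K T \<pi> "window_group D N W" "\<lambda>_. a / 12"
    using scales(2-4) short unfolding D_def[symmetric]
    by (intro block_instance_window_group[OF K policy D sumT]) (auto simp: power2_eq_square)
  have "(\<Sum>t=1..<T. if window_group D N W t \<noteq> window_group D N W (t+1) then a / 12 + a / 12 else 0)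
      = (\<Sum>t=1..<T. if window_group D N W t \<noteq> window_group D N W (t+1) then a / 6 else 0)"
    by (intro sum.cong refl) auto
  also have "\<dots> \<le> a / 6 * (real T / D)"
    using window_group_changes_le[OF _ sumT, of D "a / 6"] D TK K scales(2) by simp
  also have "\<dots> \<le> V" using scales(5) D V by (simp add: field_simps)
  finally have var: "(\<Sum>t=1..<T. if window_group D N W t \<noteq> window_group D N W (t+1)
      then a / 12 + a / 12 else 0) \<le> V" .
  have "window_group D N W t = window_group D N W t'"
    if "j \<in> {1..N}" "t \<in> window W j" "t' \<in> window W j" for j t t'
    unfolding window_group_def using windows_before_eq[OF that] by simp
  hence "(\<Sum>t=1..T. a / 12 * ((1 - sqrt (ln (4/3))) / 2)) \<le> worst_regret K T N W V \<pi>"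
    by (intro worst_regret_ge_block_gaps[OF Wpos sumT _ var])
  moreover have "(\<Sum>t=1..T. a / 12 * ((1 - sqrt (ln (4/3))) / 2))
      = (1/8 - sqrt (ln (4/3)) / 8) / 3 * (real T * a)"
    by (simp add: field_simps)
  ultimately show ?thesis unfolding scales(6) by (simp only: mult.assoc)
qed

text \<open>Window \<open>m + 1\<close> is block \<open>m\<close>; the value for \<open>m \<ge> N\<close> is irrelevant.\<close>
definition window_gap :: "nat \<Rightarrow> nat \<Rightarrow> (nat \<Rightarrow> nat) \<Rightarrow> nat \<Rightarrow> real" where
  "window_gap K N W m = (if m < N then sqrt (real K / real (W (m+1))) / 4 else 1/4)"

lemma block_instance_windows:
  assumes K: "K \<ge> 2" and policy: "is_policy K \<pi>"
    and Wpos: "\<forall>j\<in>{1..N}. W j > 0" and sumT: "(\<Sum>j=1..N. W j) = T"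
    and long: "\<forall>i\<in>{1..N}. real K \<le> real (W i)"
  shows "block_instance K T \<pi> (windows_before N W) (window_gap K N W)"
proof
  show "0 < window_gap K N W m" for m unfolding window_gap_def using K Wpos by auto
  show "window_gap K N W m \<le> 1/4" for m
    using long unfolding window_gap_def by (auto simp: divide_le_eq)
  show "16 * (window_gap K N W m)\<^sup>2 * real (card (block T (windows_before N W) m)) \<le> real K" for m
  proof (cases "m < N")
    case True
    have "block T (windows_before N W) m \<subseteq> window W (m+1)"
      using windows_before_less[OF sumT] unfolding block_def by auto
    hence "card (block T (windows_before N W) m) \<le> W (m+1)"
      using card_mono[of "window W (m+1)"] card_window[of "m+1" W] by (simp add: window_def)
    moreover have "16 * (window_gap K N W m)\<^sup>2 = real K / real (W (m+1))"
      using True Wpos unfolding window_gap_def by (simp add: power_divide)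
    ultimately show ?thesis using True Wpos K by (simp add: divide_le_eq)
  next
    case False
    hence "block T (windows_before N W) m = {}"
      using windows_before_less[OF sumT] unfolding block_def by fastforce
    thus ?thesis by simp
  qed
qed (use K policy windows_before_mono in auto)

lemma sum_window_gap:
  assumes Wpos: "\<forall>j\<in>{1..N}. W j > 0" and sumT: "(\<Sum>j=1..N. W j) = T"
  shows "(\<Sum>t=1..T. window_gap K N W (windows_before N W t) * c)
         = c / 4 * (\<Sum>i=1..N. sqrt (real K * real (W i)))"
  unfolding sum_by_windows[OF sumT, where f="\<lambda>m. window_gap K N W m * c"] sum_distrib_left
proof (intro sum.cong refl)
  fix j assume j: "j \<in> {1..N}"
  have root: "sqrt (real K * real (W j)) = real (W j) * sqrt (real K / real (W j))"
    using Wpos j by (simp add: real_sqrt_divide real_sqrt_mult field_simps)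
  have gap: "window_gap K N W (j - 1) = sqrt (real K / real (W j)) / 4"
    using j unfolding window_gap_def by auto
  show "real (W j) * (window_gap K N W (j - 1) * c) = c / 4 * sqrt (real K * real (W j))"
    unfolding gap root by (simp add: field_simps)
qed

lemma window_gap_le:
  assumes "m < N" "0 < D" "\<forall>i\<in>{1..N}. D \<le> real (W i)"
  shows "window_gap K N W m \<le> sqrt (real K / D) / 4"
proof -
  have "D \<le> real (W (m+1))" using assms by auto
  hence "real K / real (W (m+1)) \<le> real K / D" using assms(2) by (intro divide_left_mono) auto
  thus ?thesis using assms(1) unfolding window_gap_def by (simp add: real_sqrt_le_mono)
qed

lemma windows_before_changes_le:
  fixes eps :: "nat \<Rightarrow> real"
  assumes sumT: "(\<Sum>j=1..N. W j) = T" and T: "1 \<le> T"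
    and eps: "\<And>m. m < N \<Longrightarrow> eps m \<le> e" and e: "0 \<le> e"
  shows "(\<Sum>t=1..<T. if windows_before N W t \<noteq> windows_before N W (t+1)
          then eps (windows_before N W t) + eps (windows_before N W (t+1)) else 0)
      \<le> 2 * e * real N"
proof -
  have "(\<Sum>t=1..<T. if windows_before N W t \<noteq> windows_before N W (t+1)
          then eps (windows_before N W t) + eps (windows_before N W (t+1)) else 0)
      \<le> (\<Sum>t=1..<T. if windows_before N W t \<noteq> windows_before N W (t+1) then 2 * e else 0)"
  proof (rule sum_mono)
    fix t assume "t \<in> {1..<T}"
    hence "windows_before N W t < N" "windows_before N W (t+1) < N"
      using windows_before_less[OF sumT] by auto
    thus "(if windows_before N W t \<noteq> windows_before N W (t+1)
          then eps (windows_before N W t) + eps (windows_before N W (t+1)) else 0)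
        \<le> (if windows_before N W t \<noteq> windows_before N W (t+1) then 2 * e else 0)"
      using eps[of "windows_before N W t"] eps[of "windows_before N W (t+1)"] by auto
  qed
  also have "\<dots> \<le> 2 * e * real (windows_before N W T - windows_before N W 1)"
    using e by (intro sum_changes_le windows_before_mono) auto
  also have "\<dots> \<le> 2 * e * real N"
    using windows_before_less[OF sumT, of T] T e by (intro mult_left_mono) auto
  finally show ?thesis .
qed

lemma worst_regret_long_windows:
  fixes K T N :: nat and V :: real and W :: "nat \<Rightarrow> nat" and \<pi> :: policy
  assumes K: "K \<ge> 2" and TK: "T \<ge> K" and V: "0 < V" and VT: "V \<le> real T / real K"
    and Wpos: "\<forall>j\<in>{1..N}. W j > 0" and sumT: "(\<Sum>j=1..N. W j) = T" and policy: "is_policy K \<pi>"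
    and long: "\<forall>i\<in>{1..N}. real (W i) \<ge> real K powr (1/3) * (real T / V) powr (2/3)"
  shows "(1/8 - sqrt (ln (4/3)) / 8) * (\<Sum>i=1..N. sqrt (real K * real (W i))) \<le> worst_regret K T N W V \<pi>"
proof -
  define D where "D = real K powr (1/3) * (real T / V) powr (2/3)"
  define a where "a = (real K * V) powr (1/3) / real T powr (1/3)"
  have K0: "0 < real K" using K by simp
  note scales = regime_scales[OF K0 V VT, folded D_def a_def]
  have D: "0 < D" using scales(1) K0 by linarith
  have WD: "\<forall>i\<in>{1..N}. D \<le> real (W i)" using long unfolding D_def by auto
  have "real K / D = a\<^sup>2" using scales(4) D by (simp add: field_simps)
  hence "sqrt (real K / D) = a" using scales(2) by simp
  hence gap: "window_gap K N W m \<le> a / 4" if "m < N" for m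
    using window_gap_le[where K=K, OF that D WD] by simp
  interpret block_instance K T \<pi> "windows_before N W" "window_gap K N W"
    using WD scales(1) by (intro block_instance_windows[OF K policy Wpos sumT]) auto
  have "(\<Sum>t=1..<T. if windows_before N W t \<noteq> windows_before N W (t+1)
          then window_gap K N W (windows_before N W t) + window_gap K N W (windows_before N W (t+1)) else 0)
      \<le> 2 * (a / 4) * real N"
    using gap scales(2) TK K by (intro windows_before_changes_le[OF sumT]) auto
  also have "\<dots> \<le> a / 2 * (real T / D)"
  proof -
    have "(\<Sum>j=1..N. D) \<le> (\<Sum>j=1..N. real (W j))" using WD by (intro sum_mono) auto
    hence "real N \<le> real T / D" using sumT D by (simp add: field_simps flip: of_nat_sum)
    thus ?thesis using scales(2) mult_left_mono[of "real N" "real T / D" "a / 2"] by simp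
  qed
  also have "\<dots> \<le> V" using scales(5) D V by (simp add: field_simps)
  finally have var: "(\<Sum>t=1..<T. if windows_before N W t \<noteq> windows_before N W (t+1)
      then window_gap K N W (windows_before N W t) + window_gap K N W (windows_before N W (t+1))
      else 0) \<le> V" .
  have "(\<Sum>t=1..T. window_gap K N W (windows_before N W t) * ((1 - sqrt (ln (4/3))) / 2))
      \<le> worst_regret K T N W V \<pi>"
    by (rule worst_regret_ge_block_gaps[OF Wpos sumT _ var]) (fact windows_before_eq)
  thus ?thesis unfolding sum_window_gap[OF Wpos sumT] by (simp add: field_simps)
qed

theorem theorem2:
  fixes K T N :: nat and V :: real and W :: "nat \<Rightarrow> nat" and \<pi> :: policy
  assumes "K \<ge> 2" and "T \<ge> K"
    and "0 < V" and "V \<le> real T / real K"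
    and "\<forall>j\<in>{1..N}. W j > 0" and "(\<Sum>j=1..N. W j) = T"
    and "is_policy K \<pi>"
  shows "(let c = 1/8 - sqrt (ln (4/3)) / 8 in
          ((\<forall>i\<in>{1..N}. real (W i) \<le> real K powr (1/3) * (real T / V) powr (2/3)) \<longrightarrow>
             worst_regret K T N W V \<pi> \<ge> c / 3 * (real K * V) powr (1/3) * real T powr (2/3))
          \<and>
          ((\<forall>i\<in>{1..N}. real (W i) \<ge> real K powr (1/3) * (real T / V) powr (2/3)) \<longrightarrow>
             worst_regret K T N W V \<pi> \<ge> c * (\<Sum>i=1..N. sqrt (real K * real (W i)))))"
  using worst_regret_short_windows[OF assms] worst_regret_long_windows[OF assms]
  unfolding Let_def by blast

end
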